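(* For every Hausdorff topological vector space $\mathcal X$ over $\mathbb K$, the exponential vector space $\mathcal C(\mathcal X)$ has a basis, i.e. $\mathcal C(\mathcal X)\smallsetminus[\mathcal C(\mathcal X)]_0$ has a basis.
   Context: $\mathbb K$ is $\mathbb R$ or $\mathbb C$. An exponential vector space (evs) over a field $K$ is a partially ordered set $(X,\leq)$ with a binary operation $+$ on $X$ and a map $K\times X\to X$, $(\alpha,x)\mapsto \alpha x$, such that: (A1) $(X,+)$ is a commutative semigroup with identity $\theta$; (A2) $x\leq y$ implies $x+z\leq y+z$ and $\alpha x\leq \alpha y$ for all $z\in X$, $\alpha\in K$; (A3) $\alpha(x+y)=\alpha x+\alpha y$, $\alpha(\beta x)=(\alpha\beta)x$, $(\alpha+\beta)x\leq \alpha x+\beta x$, $1x=x$; (A4) $\alpha x=\theta$ iff $\alpha=0$ or $x=\theta$; (A5) $x+(-1)x=\theta$ iff $x\in X_0$, where $X_0:=\{z\in X: y\not\leq z \text{ for all } y\in X\smallsetminus\{z\}\}$ (the set of minimal elements); (A6) for each $x\in X$ there is $p\in X_0$ with $p\leq x$. $\mathcal C(\mathcal X)$ is the set of nonempty compact subsets of $\mathcal X$ with $A+B:=\{a+b:a\in A,b\in B\}$, $\alpha A:=\{\alpha a:a\in A\}$, and order given by set inclusion; it is an evs over $\mathbb K$ whose primitive space consists of the singletons. For $x\in X\smallsetminus X_0$ let $L(x):=\{z\in X: z\geq \alpha x+p \text{ for some } \alpha\in K\smallsetminus\{0\},\ p\in X_0\}$. A subset $B\subseteq X\smallsetminus X_0$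 generates $X\smallsetminus X_0$ if $X\smallsetminus X_0=\bigcup_{b\in B}L(b)$. Elements $x,y\in X\smallsetminus X_0$ are orderly dependent if $x\in L(y)$ or $y\in L(x)$, and orderly independent otherwise; $B$ is orderly independent if any two distinct members are orderly independent. A basis of $X\smallsetminus X_0$ is an orderly independent generating subset. *)

theory Defs
  imports "HOL-Analysis.Analysis"
begin

definition tvs :: "('k::real_normed_field \<Rightarrow> 'v::{ab_group_add,topological_space} \<Rightarrow> 'v) \<Rightarrow> bool" where
  "tvs s \<longleftrightarrow> Vector_Spaces.vector_space s
     \<and> continuous_on UNIV (\<lambda>p::'v \<times> 'v. fst p + snd p)
     \<and> continuous_on UNIV (\<lambda>p::'k \<times> 'v. s (fst p) (snd p))"

text \<open>The exponential vector space C(X): nonempty compact subsets, ordered by inclusion.\<close>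
definition CX :: "'v::{plus,topological_space} set set" where
  "CX = {A. A \<noteq> {} \<and> compact A}"

definition set_add :: "'v::plus set \<Rightarrow> 'v set \<Rightarrow> 'v set" where
  "set_add A B = {a + b | a b. a \<in> A \<and> b \<in> B}"

definition set_smul :: "('k \<Rightarrow> 'v \<Rightarrow> 'v) \<Rightarrow> 'k \<Rightarrow> 'v set \<Rightarrow> 'v set" where
  "set_smul s \<alpha> A = (s \<alpha>) ` A"

definition CX0 :: "'v::{plus,topological_space} set set" where
  "CX0 = {z \<in> CX. \<forall>y \<in> CX. y \<subseteq> z \<longrightarrow> y = z}"

definition Lset :: "('k::zero \<Rightarrow> 'v::{plus,topological_space} \<Rightarrow> 'v) \<Rightarrow> 'v set \<Rightarrow> 'v set set" where
  "Lset s x = {z \<in> CX. \<exists>\<alpha> p. \<alpha> \<noteq> 0 \<and> p \<in> CX0 \<and> set_add (set_smul s \<alpha> x) p \<subseteq> z}"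

definition generates :: "('k::zero \<Rightarrow> 'v::{plus,topological_space} \<Rightarrow> 'v) \<Rightarrow> 'v set set \<Rightarrow> bool" where
  "generates s B \<longleftrightarrow> B \<subseteq> CX - CX0 \<and> CX - CX0 = (\<Union>b\<in>B. Lset s b)"

definition orderly_dependent :: "('k::zero \<Rightarrow> 'v::{plus,topological_space} \<Rightarrow> 'v) \<Rightarrow> 'v set \<Rightarrow> 'v set \<Rightarrow> bool" where
  "orderly_dependent s x y \<longleftrightarrow> x \<in> Lset s y \<or> y \<in> Lset s x"

definition orderly_independent_set :: "('k::zero \<Rightarrow> 'v::{plus,topological_space} \<Rightarrow> 'v) \<Rightarrow> 'v set set \<Rightarrow> bool" where
  "orderly_independent_set s B \<longleftrightarrow> (\<forall>x\<in>B. \<forall>y\<in>B. x \<noteq> y \<longrightarrow> \<not> orderly_dependent s x y)"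

definition is_basis_CX :: "('k::zero \<Rightarrow> 'v::{plus,topological_space} \<Rightarrow> 'v) \<Rightarrow> 'v set set \<Rightarrow> bool" where
  "is_basis_CX s B \<longleftrightarrow> B \<subseteq> CX - CX0 \<and> orderly_independent_set s B \<and> generates s B"

end

theory Submission
  imports Defs
begin

text \<open>Choose one nonzero vector r on every line through 0.
  The doubletons {0, r} form a basis: a compact set that is not a singleton contains two
  points a \<noteq> b, and {a, b} = \<gamma> {0, r} + {a} for the r on the line of b - a; conversely
  {0, r} \<in> L({0, r'}) forces r and r' onto the same line, hence r = r'.\<close>

definition parallel :: "('k::zero \<Rightarrow> 'v \<Rightarrow> 'v) \<Rightarrow> 'v \<Rightarrow> 'v \<Rightarrow> bool" where
  "parallel s u w \<longleftrightarrow> (\<exists>\<beta>. \<beta> \<noteq> 0 \<and> u = s \<beta> w)"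

context vector_space
begin

lemma parallel_refl: "parallel scale u u"
  unfolding parallel_def by (rule exI[of _ 1]) simp

lemma parallel_sym:
  assumes "parallel scale u w"
  shows "parallel scale w u"
proof -
  obtain \<beta> where "\<beta> \<noteq> 0" "u = scale \<beta> w"
    using assms unfolding parallel_def by blast
  then have "inverse \<beta> \<noteq> 0 \<and> w = scale (inverse \<beta>) u" by simp
  then show ?thesis unfolding parallel_def by blast
qed

lemma parallel_trans:
  assumes "parallel scale u w" "parallel scale w x"
  shows "parallel scale u x"
proof -
  obtain \<beta> \<gamma> where "\<beta> \<noteq> 0" "u = scale \<beta> w" "\<gamma> \<noteq> 0" "w = scale \<gamma> x"
    using assms unfolding parallel_def by blast
  then have "\<beta> * \<gamma> \<noteq> 0 \<and> u = scale (\<beta> * \<gamma>) x" by simp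
  then show ?thesis unfolding parallel_def by blast
qed

lemma parallel_zero_iff:
  assumes "parallel scale u w"
  shows "u = 0 \<longleftrightarrow> w = 0"
  using assms unfolding parallel_def by auto

lemma ex_line_representatives:
  "\<exists>R. 0 \<notin> R \<and> (\<forall>u. u \<noteq> 0 \<longrightarrow> (\<exists>r\<in>R. parallel scale u r))
     \<and> (\<forall>r\<in>R. \<forall>r'\<in>R. parallel scale r r' \<longrightarrow> r = r')"
proof -
  define rep where "rep u = (SOME r. parallel scale r u)" for u
  have rep: "parallel scale (rep u) u" for u
    unfolding rep_def by (rule someI[of _ u]) (rule parallel_refl)
  have rep_cong: "rep u = rep w" if "parallel scale u w" for u w
  proof -
    have "parallel scale r u \<longleftrightarrow> parallel scale r w" for r
      using parallel_trans[OF _ that, of r] parallel_trans[OF _ parallel_sym[OF that], of r]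
      by blast
    then show ?thesis unfolding rep_def by simp
  qed
  define R where "R = rep ` (UNIV - {0})"
  have "rep u \<noteq> 0" if "u \<noteq> 0" for u
    using parallel_zero_iff[OF rep[of u]] that by simp
  then have "0 \<notin> R"
    unfolding R_def by (metis DiffE image_iff singletonI)
  moreover have "\<exists>r\<in>R. parallel scale u r" if "u \<noteq> 0" for u
    unfolding R_def using that parallel_sym[OF rep[of u]] by blast
  moreover have "r = r'" if "r \<in> R" "r' \<in> R" and rr': "parallel scale r r'" for r r'
  proof -
    obtain u w where r: "r = rep u" and r': "r' = rep w"
      using \<open>r \<in> R\<close> \<open>r' \<in> R\<close> unfolding R_def by blast
    have "parallel scale u w"
      using parallel_trans[OF parallel_trans[OF parallel_sym[OF rep[of u]] rr'[unfolded r r']] rep]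
      .
    then show ?thesis unfolding r r' by (rule rep_cong)
  qed
  ultimately show ?thesis by blast
qed

end

lemma mem_CX0_iff: "z \<in> CX0 \<longleftrightarrow> (\<exists>c. z = {c})"
proof
  assume z: "z \<in> CX0"
  then obtain c where c: "c \<in> z" by (auto simp: CX0_def CX_def)
  have "{c} \<in> CX" by (simp add: CX_def)
  with z c show "\<exists>c. z = {c}" unfolding CX0_def by blast
qed (auto simp: CX0_def CX_def)

lemma mem_CX_minus_CX0_iff: "z \<in> CX - CX0 \<longleftrightarrow> z \<in> CX \<and> (\<exists>a\<in>z. \<exists>b\<in>z. a \<noteq> b)"
proof -
  have "(\<exists>c. z = {c}) \<longleftrightarrow> \<not> (\<exists>a\<in>z. \<exists>b\<in>z. a \<noteq> b)" if "z \<noteq> {}"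
    using that is_singletonI'[of z] unfolding is_singleton_def by auto
  then show ?thesis
    by (cases "z = {}") (simp_all add: mem_CX0_iff CX_def)
qed

lemma doubleton_in_CX_minus_CX0: "a \<noteq> b \<Longrightarrow> {a, b} \<in> CX - CX0"
  unfolding mem_CX_minus_CX0_iff by (auto simp: CX_def)

lemma mem_Lset_iff:
  "z \<in> Lset s x \<longleftrightarrow> z \<in> CX \<and> (\<exists>\<alpha> c. \<alpha> \<noteq> 0 \<and> (\<lambda>y. s \<alpha> y + c) ` x \<subseteq> z)"
proof -
  have "set_add (set_smul s \<alpha> x) {c} = (\<lambda>y. s \<alpha> y + c) ` x" for \<alpha> c
    unfolding set_add_def set_smul_def by auto
  moreover have "(\<exists>p. (\<exists>c. p = {c}) \<and> P p) \<longleftrightarrow> (\<exists>c. P {c})" for P :: "'a set \<Rightarrow> bool"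
    by blast
  ultimately show ?thesis unfolding Lset_def mem_CX0_iff by simp
qed

lemma Lset_subset_CX_minus_CX0:
  assumes "vector_space s" and "x \<in> CX - CX0"
  shows "Lset s x \<subseteq> CX - CX0"
proof
  interpret vector_space s by (fact assms(1))
  fix z assume "z \<in> Lset s x"
  then obtain \<alpha> c where z: "z \<in> CX" "\<alpha> \<noteq> 0" "(\<lambda>y. s \<alpha> y + c) ` x \<subseteq> z"
    unfolding mem_Lset_iff by blast
  obtain a b where "a \<in> x" "b \<in> x" "a \<noteq> b"
    using assms(2) unfolding mem_CX_minus_CX0_iff by blast
  with z have "s \<alpha> a + c \<in> z" "s \<alpha> b + c \<in> z" "s \<alpha> a + c \<noteq> s \<alpha> b + c"
    by auto
  with z(1) show "z \<in> CX - CX0"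
    unfolding mem_CX_minus_CX0_iff by blast
qed

lemma mem_Lset_doubleton:
  assumes "vector_space s"
    and "z \<in> CX" "a \<in> z" "b \<in> z" "\<gamma> \<noteq> 0" "b - a = s \<gamma> v"
  shows "z \<in> Lset s {0, v}"
proof -
  interpret vector_space s by (fact assms(1))
  have "b = s \<gamma> v + a" using assms(6) by (metis diff_add_cancel)
  then have "(\<lambda>y. s \<gamma> y + a) ` {0, v} \<subseteq> z" using assms(3,4) by simp
  with assms(2,5) show ?thesis
    unfolding mem_Lset_iff by blast
qed

lemma parallel_if_doubleton_mem_Lset:
  assumes "vector_space s" and "v \<noteq> 0" and "{0, u} \<in> Lset s {0, v}"
  shows "parallel s u v"
proof -
  interpret vector_space s by (fact assms(1))
  obtain \<alpha> c where "\<alpha> \<noteq> 0" and c: "c \<in> {0, u}" "s \<alpha> v + c \<in> {0, u}"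
    using assms(3) unfolding mem_Lset_iff by auto
  have "s \<alpha> v \<noteq> 0" using \<open>\<alpha> \<noteq> 0\<close> assms(2) by simp
  with c consider "u = s \<alpha> v" | "s \<alpha> v + u = 0"
    by auto
  then show ?thesis
  proof cases
    case 1
    with \<open>\<alpha> \<noteq> 0\<close> show ?thesis unfolding parallel_def by blast
  next
    case 2
    then have "u = s (- \<alpha>) v" by (simp add: add_eq_0_iff)
    with \<open>\<alpha> \<noteq> 0\<close> show ?thesis unfolding parallel_def by (intro exI[of _ "- \<alpha>"]) simp
  qed
qed

lemma doubletons_subset_CX_minus_CX0:
  assumes "0 \<notin> R"
  shows "(\<lambda>r. {0, r}) ` R \<subseteq> CX - CX0"
  using assms by (intro image_subsetI doubleton_in_CX_minus_CX0) blast

lemma generates_doubletons: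
  fixes s :: "'k::field \<Rightarrow> 'v::{ab_group_add,topological_space} \<Rightarrow> 'v"
  assumes vs: "vector_space s" and R0: "0 \<notin> R"
    and R_covers: "\<forall>u. u \<noteq> 0 \<longrightarrow> (\<exists>r\<in>R. parallel s u r)"
  shows "generates s ((\<lambda>r. {0, r}) ` R)"
proof -
  have "CX - CX0 \<subseteq> (\<Union>r\<in>R. Lset s {0, r})"
  proof
    fix z :: "'v set" assume "z \<in> CX - CX0"
    then obtain a b where z: "z \<in> CX" "a \<in> z" "b \<in> z" "a \<noteq> b"
      unfolding mem_CX_minus_CX0_iff by blast
    moreover have "b - a \<noteq> 0" using z(4) by simp
    ultimately obtain r where "r \<in> R" "parallel s (b - a) r"
      using R_covers by blast
    then obtain \<gamma> where "\<gamma> \<noteq> 0" "b - a = s \<gamma> r"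
      unfolding parallel_def by blast
    with z have "z \<in> Lset s {0, r}"
      by (intro mem_Lset_doubleton[OF vs])
    with \<open>r \<in> R\<close> show "z \<in> (\<Union>r\<in>R. Lset s {0, r})"
      by blast
  qed
  moreover have "(\<Union>r\<in>R. Lset s {0, r}) \<subseteq> CX - CX0"
    using doubletons_subset_CX_minus_CX0[OF R0] Lset_subset_CX_minus_CX0[OF vs] by blast
  ultimately show ?thesis
    unfolding generates_def using doubletons_subset_CX_minus_CX0[OF R0] by auto
qed

lemma orderly_independent_doubletons:
  fixes s :: "'k::field \<Rightarrow> 'v::{ab_group_add,topological_space} \<Rightarrow> 'v"
  assumes vs: "vector_space s" and R0: "0 \<notin> R"
    and R_unique: "\<forall>r\<in>R. \<forall>r'\<in>R. parallel s r r' \<longrightarrow> r = r'"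
  shows "orderly_independent_set s ((\<lambda>r. {0, r}) ` R)"
proof -
  have "r = r'" if "r \<in> R" "r' \<in> R" and "{0, r} \<in> Lset s {0, r'}" for r r'
  proof -
    from that R0 have "parallel s r r'"
      by (intro parallel_if_doubleton_mem_Lset[OF vs]) auto
    with that(1,2) R_unique show ?thesis by blast
  qed
  then show ?thesis
    unfolding orderly_independent_set_def orderly_dependent_def by blast
qed

lemma CX_has_basis:
  fixes s :: "'k::field \<Rightarrow> 'v::{ab_group_add,topological_space} \<Rightarrow> 'v"
  assumes vs: "vector_space s"
  shows "\<exists>B. is_basis_CX s B"
proof -
  obtain R where "0 \<notin> R"
    and "\<forall>u. u \<noteq> 0 \<longrightarrow> (\<exists>r\<in>R. parallel s u r)"
    and "\<forall>r\<in>R. \<forall>r'\<in>R. parallel s r r' \<longrightarrow> r = r'"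
    using vector_space.ex_line_representatives[OF vs] by (elim exE conjE) (rule that)
  then have "is_basis_CX s ((\<lambda>r. {0, r}) ` R)"
    unfolding is_basis_CX_def
    by (simp add: doubletons_subset_CX_minus_CX0 generates_doubletons[OF vs]
        orderly_independent_doubletons[OF vs])
  then show ?thesis ..
qed

theorem mainTheorem11:
  shows "(\<forall>s :: real \<Rightarrow> 'a::{ab_group_add,t2_space} \<Rightarrow> 'a. tvs s \<longrightarrow> (\<exists>B. is_basis_CX s B))
       \<and> (\<forall>s :: complex \<Rightarrow> 'b::{ab_group_add,t2_space} \<Rightarrow> 'b. tvs s \<longrightarrow> (\<exists>B. is_basis_CX s B))"
  unfolding tvs_def by (auto intro: CX_has_basis)

end
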